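(* Assume (C1) and (C2). For any $u\in\mathcal{D}$ with $u^+\neq0$ and $u^-\neq0$, there exists a unique pair of positive constants $(s_0,t_0)$ such that $s_0u^++t_0u^-\in\mathcal{M}$.
   Context: Fix real numbers $p,q,r$ with $1<p<q$, $\frac p2$ a positive integer, and $r\ge1$, and functions $a,b,c:\mathbb{Z}\to(0,+\infty)$. Conditions: - (C1) There is $b_0>0$ with $b(n)\ge b_0$ for all $n$ and $b(n)\to+\infty$ as $|n|\to\infty$. - (C2) There is $c_0>0$ with $c(n)\le c_0$ for all $n$ and $\sum_n c(n)<+\infty$. Notation for a real sequence $u=(u(n))_{n\in\mathbb{Z}}$: $\Delta u(n)=u(n+1)-u(n)$, $u^+(n)=\max\{u(n),0\}$, $u^-(n)=\min\{u(n),0\}$. Spaces: - $E$ is the set of real sequences $u$ with $\|u\|:=\big(\sum_n[a(n)|\Delta u(n)|^p+b(n)|u(n)|^p]\big)^{1/p}<\infty$. - $\mathcal{D}=\{u\in E:\sum_n c(n)|u(n)|^q\ln|u(n)|^r<+\infty\}$, where terms with $u(n)=0$ are read as $0$. For $u,v\in\mathcal{D}$: $$\langle I'(u),v\rangle=\sum_n[a(n)|\Delta u(n)|^{p-2}\Delta u(n)\Delta v(n)+b(n)|u(n)|^{p-2}u(n)v(n)]-\sum_n c(n)|u(n)|^{q-2}u(n)v(n)\ln|u(n)|^r.$$ $\mathcal{M}=\{u\in\mathcal{D}:u^+\ne0,\ u^-\neq0,\ \langle I'(u),u^+\rangle=0,\ \langle I'(u),u^-\rangle=0\}$. *)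

theory Defs
  imports "HOL-Analysis.Analysis"
begin

definition fdiff :: "(int \<Rightarrow> real) \<Rightarrow> int \<Rightarrow> real" where
  "fdiff u n = u (n + 1) - u n"

definition pos_part :: "(int \<Rightarrow> real) \<Rightarrow> int \<Rightarrow> real" where
  "pos_part u n = max (u n) 0"

definition neg_part :: "(int \<Rightarrow> real) \<Rightarrow> int \<Rightarrow> real" where
  "neg_part u n = min (u n) 0"

definition spaceE :: "(int \<Rightarrow> real) \<Rightarrow> (int \<Rightarrow> real) \<Rightarrow> real \<Rightarrow> (int \<Rightarrow> real) set" where
  "spaceE a b p = {u. (\<lambda>n. a n * \<bar>fdiff u n\<bar> powr p + b n * \<bar>u n\<bar> powr p) summable_on UNIV}"

text \<open>The set D. Here ln |u|^r is read as ln (|u|^r); for u n = 0 the term is 0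
  (in Isabelle 0 powr q = 0 and ln 0 = 0).\<close>
definition spaceD :: "(int \<Rightarrow> real) \<Rightarrow> (int \<Rightarrow> real) \<Rightarrow> (int \<Rightarrow> real) \<Rightarrow> real \<Rightarrow> real \<Rightarrow> real
    \<Rightarrow> (int \<Rightarrow> real) set" where
  "spaceD a b c p q r = {u \<in> spaceE a b p.
      (\<lambda>n. c n * \<bar>u n\<bar> powr q * ln (\<bar>u n\<bar> powr r)) summable_on UNIV}"

definition dI :: "(int \<Rightarrow> real) \<Rightarrow> (int \<Rightarrow> real) \<Rightarrow> (int \<Rightarrow> real) \<Rightarrow> real \<Rightarrow> real \<Rightarrow> real
    \<Rightarrow> (int \<Rightarrow> real) \<Rightarrow> (int \<Rightarrow> real) \<Rightarrow> real" where
  "dI a b c p q r u v =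
     (\<Sum>\<^sub>\<infinity>n. a n * \<bar>fdiff u n\<bar> powr (p - 2) * fdiff u n * fdiff v n
              + b n * \<bar>u n\<bar> powr (p - 2) * u n * v n)
   - (\<Sum>\<^sub>\<infinity>n. c n * \<bar>u n\<bar> powr (q - 2) * u n * v n * ln (\<bar>u n\<bar> powr r))"

definition nehariM :: "(int \<Rightarrow> real) \<Rightarrow> (int \<Rightarrow> real) \<Rightarrow> (int \<Rightarrow> real) \<Rightarrow> real \<Rightarrow> real \<Rightarrow> real
    \<Rightarrow> (int \<Rightarrow> real) set" where
  "nehariM a b c p q r = {u \<in> spaceD a b c p q r.
      pos_part u \<noteq> (\<lambda>_. 0) \<and> neg_part u \<noteq> (\<lambda>_. 0) \<and>
      dI a b c p q r u (pos_part u) = 0 \<and> dI a b c p q r u (neg_part u) = 0}"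

end

theory Submission
  imports Defs
begin

(* For w = s u^+ + t u^- with s, t > 0 one has w^+ = s u^+ and w^- = t u^-, and since
   Delta u^+ (n) and Delta u^- (n) never have opposite signs, |Delta w| = s |Delta u^+| + t |Delta u^-|.
   Hence <I'(w), w^+> = s^p (L(t/s) + beta - g(s)), where L is a continuous nondecreasing function
   of the ratio t/s, beta > 0, and g(s) = s^(q-p) (r A ln s + B) with A > 0; the condition
   <I'(w), w^-> = 0 has the same shape for -u, with the ratio s/t.  Beyond its zero exp(-B/A),
   g is a continuous increasing bijection onto (0, oo), so each equation determines s, resp. t,
   as a continuous monotone function of rho = t/s, and the intermediate value theorem yields a
   rho at which the two are compatible.  For uniqueness, if two solutions had different ratios,
   the monotonicity of L and g would move s and t so as to reverse the order of the ratios.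
   Of the hypotheses on the coefficients only b >= b0 > 0 (elements of E are then bounded, so
   that sum c (u^+)^q converges) and the summability of c are needed. *)

lemma abs_powr_minus_one_mult_abs: "\<bar>x::real\<bar> powr (e - 1) * \<bar>x\<bar> = \<bar>x\<bar> powr e"
proof (cases "x = 0")
  case False
  then show ?thesis using powr_add[of "\<bar>x\<bar>" "e - 1" 1] by simp
qed simp

lemma abs_powr_minus_two_mult_same_sign:
  fixes x y :: real
  assumes "0 \<le> x * y"
  shows "\<bar>x\<bar> powr (e - 2) * x * y = \<bar>x\<bar> powr (e - 1) * \<bar>y\<bar>"
proof -
  have "x * y = \<bar>x\<bar> * \<bar>y\<bar>" using assms by (metis abs_mult abs_of_nonneg)
  moreover have "\<bar>x\<bar> powr (e - 2) * \<bar>x\<bar> = \<bar>x\<bar> powr (e - 1)"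
    using abs_powr_minus_one_mult_abs[of x "e - 1"] by simp
  ultimately show ?thesis by (simp add: mult.assoc)
qed

lemma abs_powr_minus_two_mult_max: "\<bar>x::real\<bar> powr (e - 2) * x * max x 0 = max x 0 powr e"
  using abs_powr_minus_two_mult_same_sign[of x "max x 0" e] abs_powr_minus_one_mult_abs[of x e]
  by (cases "0 < x") auto

lemma abs_add_same_sign:
  fixes x y s t :: real
  assumes "0 \<le> x * y" "0 \<le> s" "0 \<le> t"
  shows "\<bar>s * x + t * y\<bar> = s * \<bar>x\<bar> + t * \<bar>y\<bar>"
proof (cases "0 \<le> x \<and> 0 \<le> y")
  case True
  then show ?thesis using assms by simp
next
  case False
  with assms(1) have "x \<le> 0" "y \<le> 0" by (auto simp: zero_le_mult_iff)
  with assms(2,3) have "s * x + t * y \<le> 0"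
    by (simp add: add_nonpos_nonpos mult_nonneg_nonpos)
  with \<open>x \<le> 0\<close> \<open>y \<le> 0\<close> show ?thesis by simp
qed

lemma powr_ln_powr_mult:
  fixes s x q r :: real
  assumes "0 < s" "0 \<le> x"
  shows "(s * x) powr q * ln ((s * x) powr r) = s powr q * (r * ln s * x powr q + x powr q * ln (x powr r))"
proof (cases "x = 0")
  case False
  with assms have "x > 0" by simp
  with assms show ?thesis by (simp add: powr_mult ln_mult algebra_simps)
qed simp

lemma max_powr_ln_abs:
  "max x 0 powr q * ln (\<bar>x::real\<bar> powr r) = max x 0 powr q * ln (max x 0 powr r)"
  by (cases "0 < x") auto

lemma abs_powr_ln_split:
  "\<bar>x::real\<bar> powr q * ln (\<bar>x\<bar> powr r)
     = max x 0 powr q * ln (max x 0 powr r) + max (- x) 0 powr q * ln (max (- x) 0 powr r)"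
  by (cases "0 < x") auto

lemma the_inv_into_strict_mono_on_le:
  fixes f :: "'a::linorder \<Rightarrow> 'b::linorder"
  assumes f: "strict_mono_on S f" and y: "y \<in> f ` S" "y' \<in> f ` S" "y \<le> y'"
  shows "the_inv_into S f y \<le> the_inv_into S f y'"
proof -
  obtain x x' where x: "x \<in> S" "x' \<in> S" "y = f x" "y' = f x'" using y(1,2) by blast
  have inj: "inj_on f S" using f by (rule strict_mono_on_imp_inj_on)
  show ?thesis
    using strict_mono_on_less_eq[OF f x(1,2)] y(3) by (simp add: x the_inv_into_f_f[OF inj])
qed

lemma isCont_the_inv_into_strict_mono_on:
  fixes f :: "real \<Rightarrow> real"
  assumes f: "strict_mono_on {l<..} f" "\<And>x. l < x \<Longrightarrow> isCont f x" and x: "l < x"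
  shows "isCont (the_inv_into {l<..} f) (f x)"
proof (rule isCont_inverse_function2[of "(l + x) / 2" x "x + 1"])
  fix z assume z: "(l + x) / 2 \<le> z" "z \<le> x + 1"
  with x have "z \<in> {l<..}" by simp
  then show "the_inv_into {l<..} f (f z) = z"
    by (rule the_inv_into_f_f[OF strict_mono_on_imp_inj_on[OF f(1)]])
  show "isCont f z" using x z by (intro f(2)) simp
qed (use x in simp_all)

lemma term_le_infsum:
  fixes f :: "'a \<Rightarrow> real"
  assumes "f summable_on UNIV" "\<And>n. 0 \<le> f n"
  shows "f n \<le> (\<Sum>\<^sub>\<infinity>n. f n)"
  using infsum_mono_neutral[of f "{n}" f UNIV] assms by simp

lemma continuous_on_infsum_dominated:
  fixes f :: "'i \<Rightarrow> 'a::topological_space \<Rightarrow> real"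
  assumes "\<And>n. continuous_on S (f n)" "\<And>n x. x \<in> S \<Longrightarrow> \<bar>f n x\<bar> \<le> M n" "M summable_on UNIV"
  shows "continuous_on S (\<lambda>x. \<Sum>\<^sub>\<infinity>n. f n x)"
proof (rule uniform_limit_theorem)
  show "uniform_limit S (\<lambda>N x. \<Sum>n\<in>N. f n x) (\<lambda>x. \<Sum>\<^sub>\<infinity>n. f n x) (finite_subsets_at_top UNIV)"
    using assms(2,3) by (intro Weierstrass_m_test_general) auto
  show "\<forall>\<^sub>F N in finite_subsets_at_top UNIV. continuous_on S (\<lambda>x. \<Sum>n\<in>N. f n x)"
    using assms(1) by (intro eventually_finite_subsets_at_top_weakI continuous_on_sum) auto
qed simp

section \<open>A two-equation system in the scaling factors\<close>

definition powr_ln_affine :: "real \<Rightarrow> real \<Rightarrow> real \<Rightarrow> real \<Rightarrow> real" where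
  "powr_ln_affine e A B s = s powr e * (A * ln s + B)"

lemma powr_ln_affine_pos_iff:
  assumes "0 < A" "0 < s"
  shows "0 < powr_ln_affine e A B s \<longleftrightarrow> exp (- B / A) < s"
proof -
  have "exp (- B / A) < s \<longleftrightarrow> - B / A < ln s" using assms(2) by (metis exp_less_cancel_iff exp_ln)
  also have "\<dots> \<longleftrightarrow> 0 < A * ln s + B" using assms(1) by (simp add: field_simps) arith
  finally show ?thesis unfolding powr_ln_affine_def using assms(2) by (simp add: zero_less_mult_iff)
qed

lemma strict_mono_on_powr_ln_affine:
  assumes "0 < A" "0 \<le> e"
  shows "strict_mono_on {exp (- B / A)<..} (powr_ln_affine e A B)"
proof (rule strict_mono_onI)
  fix x y assume x: "x \<in> {exp (- B / A)<..}" and "x < y"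
  have "0 < x" using x by (simp add: less_trans[OF exp_gt_zero])
  then have lin: "0 < A * ln x + B" using x powr_ln_affine_pos_iff[OF assms(1)]
    by (simp add: powr_ln_affine_def zero_less_mult_iff)
  have "A * ln x + B < A * ln y + B" using \<open>0 < x\<close> \<open>x < y\<close> assms(1) by simp
  moreover have "x powr e \<le> y powr e" using \<open>0 < x\<close> \<open>x < y\<close> assms(2) by (intro powr_mono2) auto
  ultimately show "powr_ln_affine e A B x < powr_ln_affine e A B y"
    unfolding powr_ln_affine_def using \<open>0 < x\<close> lin
    by (intro mult_le_less_imp_less) auto
qed

lemma isCont_powr_ln_affine: "0 < s \<Longrightarrow> isCont (powr_ln_affine e A B) s"
  unfolding powr_ln_affine_def by (intro continuous_intros) auto

lemma powr_ln_affine_image: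
  assumes A: "0 < A" and e: "0 \<le> e"
  shows "powr_ln_affine e A B ` {exp (- B / A)<..} = {0<..}"
proof (intro equalityI subsetI)
  fix y assume "y \<in> powr_ln_affine e A B ` {exp (- B / A)<..}"
  then obtain x where x: "exp (- B / A) < x" "y = powr_ln_affine e A B x" by auto
  have "0 < x" using x(1) exp_gt_zero[of "- B / A"] by linarith
  with x show "y \<in> {0<..}" using powr_ln_affine_pos_iff[OF A] by simp
next
  fix y :: real assume "y \<in> {0<..}"
  then have y: "0 < y" by simp
  define l where "l = exp (- B / A)"
  define S where "S = exp ((y + \<bar>B\<bar>) / A)"
  have l: "0 < l" unfolding l_def by simp
  have gl: "powr_ln_affine e A B l = 0" unfolding powr_ln_affine_def l_def using A by simp
  have "- B / A < (y + \<bar>B\<bar>) / A" using A y by (intro divide_strict_right_mono) auto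
  then have "l < S" unfolding l_def S_def by simp
  have "0 \<le> (y + \<bar>B\<bar>) / A" using A y by simp
  then have "1 \<le> S powr e" unfolding S_def using e by (intro ge_one_powr_ge_zero) auto
  moreover have lin: "y \<le> A * ln S + B" unfolding S_def using A by simp
  ultimately have "1 * (A * ln S + B) \<le> S powr e * (A * ln S + B)"
    using y by (intro mult_right_mono) auto
  with lin have gS: "y \<le> powr_ln_affine e A B S" unfolding powr_ln_affine_def by simp
  have "continuous_on {l..S} (powr_ln_affine e A B)"
    using l by (intro continuous_at_imp_continuous_on ballI isCont_powr_ln_affine) auto
  then obtain z where z: "l \<le> z" "powr_ln_affine e A B z = y"
    using IVT'[of "powr_ln_affine e A B" l y S] gl gS \<open>l < S\<close> y by auto
  have "z \<noteq> l" using gl z(2) y by auto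
  with z show "y \<in> powr_ln_affine e A B ` {exp (- B / A)<..}" unfolding l_def by force
qed

lemma powr_ln_affine_inverse:
  fixes A B e y :: real
  assumes A: "0 < A" and e: "0 \<le> e" and y: "0 < y"
  defines "h \<equiv> the_inv_into {exp (- B / A)<..} (powr_ln_affine e A B)"
  shows "0 < h y" "powr_ln_affine e A B (h y) = y" "isCont h y"
    and "y \<le> y' \<Longrightarrow> h y \<le> h y'"
proof -
  note mono = strict_mono_on_powr_ln_affine[OF A e, of B]
  note inj = strict_mono_on_imp_inj_on[OF mono]
  have img: "z \<in> powr_ln_affine e A B ` {exp (- B / A)<..}" if "0 < z" for z
    using powr_ln_affine_image[OF A e, of B] that by simp
  have hI: "exp (- B / A) < h y" unfolding h_def using the_inv_into_into[OF inj img[OF y] order_refl] by simp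
  then show "0 < h y" using exp_gt_zero[of "- B / A"] by linarith
  show gh: "powr_ln_affine e A B (h y) = y" unfolding h_def by (rule f_the_inv_into_f[OF inj img[OF y]])
  have "isCont h (powr_ln_affine e A B (h y))" unfolding h_def
    by (rule isCont_the_inv_into_strict_mono_on[OF mono isCont_powr_ln_affine hI[unfolded h_def]])
       (use exp_gt_zero[of "- B / A"] in linarith)
  then show "isCont h y" unfolding gh .
  show "h y \<le> h y'" if "y \<le> y'"
    unfolding h_def using that y by (intro the_inv_into_strict_mono_on_le[OF mono] img) auto
qed

lemma ex_balanced_ratio:
  fixes \<sigma> \<tau> :: "real \<Rightarrow> real"
  assumes \<sigma>: "\<And>x. 0 < x \<Longrightarrow> isCont \<sigma> x" "\<And>x y. 0 < x \<Longrightarrow> x \<le> y \<Longrightarrow> \<sigma> x \<le> \<sigma> y"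
      "\<And>x. 0 < x \<Longrightarrow> 0 < \<sigma> x"
    and \<tau>: "\<And>x. 0 < x \<Longrightarrow> isCont \<tau> x" "\<And>x y. 0 < x \<Longrightarrow> x \<le> y \<Longrightarrow> \<tau> y \<le> \<tau> x"
      "\<And>x. 0 < x \<Longrightarrow> 0 < \<tau> x"
  shows "\<exists>\<rho>>0. \<tau> \<rho> = \<rho> * \<sigma> \<rho>"
proof -
  define \<Phi> where "\<Phi> \<rho> = \<tau> \<rho> - \<rho> * \<sigma> \<rho>" for \<rho>
  have \<sigma>1: "0 < \<sigma> 1" and \<tau>1: "0 < \<tau> 1" using \<sigma>(3) \<tau>(3) by simp_all
  define lo where "lo = min 1 (\<tau> 1 / (2 * \<sigma> 1))"
  define hi where "hi = max 1 (2 * \<tau> 1 / \<sigma> 1)"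
  have lo: "0 < lo" "lo \<le> 1" unfolding lo_def using \<sigma>1 \<tau>1 by auto
  have hi: "1 \<le> hi" unfolding hi_def by simp
  have "lo * \<sigma> lo \<le> lo * \<sigma> 1" using lo \<sigma>(2)[of lo 1] by simp
  also have "\<dots> \<le> \<tau> 1 / (2 * \<sigma> 1) * \<sigma> 1" using \<sigma>1 unfolding lo_def by (intro mult_right_mono) auto
  also have "\<dots> < \<tau> 1" using \<sigma>1 \<tau>1 by simp
  also have "\<dots> \<le> \<tau> lo" using lo \<tau>(2)[of lo 1] by simp
  finally have "0 \<le> \<Phi> lo" unfolding \<Phi>_def by simp
  have "\<tau> hi \<le> \<tau> 1" using hi \<tau>(2)[of 1 hi] by simp
  also have "\<dots> < 2 * \<tau> 1 / \<sigma> 1 * \<sigma> 1" using \<sigma>1 \<tau>1 by simp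
  also have "\<dots> \<le> hi * \<sigma> 1" using \<sigma>1 unfolding hi_def by (intro mult_right_mono) auto
  also have "\<dots> \<le> hi * \<sigma> hi" using hi \<sigma>(2)[of 1 hi] by simp
  finally have "\<Phi> hi \<le> 0" unfolding \<Phi>_def by simp
  have "isCont \<Phi> x" if "lo \<le> x" for x
    unfolding \<Phi>_def using that lo by (intro continuous_intros \<sigma>(1) \<tau>(1)) auto
  then obtain \<rho> where "lo \<le> \<rho>" "\<Phi> \<rho> = 0"
    using IVT2[of \<Phi> hi 0 lo] \<open>0 \<le> \<Phi> lo\<close> \<open>\<Phi> hi \<le> 0\<close> lo hi by auto
  with lo show ?thesis unfolding \<Phi>_def by (intro exI[of _ \<rho>]) auto
qed

context
  fixes e A1 B1 A2 B2 :: real and H1 H2 :: "real \<Rightarrow> real"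
  assumes e: "0 \<le> e" and A: "0 < A1" "0 < A2"
    and H1: "\<And>x y. 0 < x \<Longrightarrow> x \<le> y \<Longrightarrow> H1 x \<le> H1 y" "\<And>x. 0 < x \<Longrightarrow> 0 < H1 x"
    and H2: "\<And>x y. 0 < x \<Longrightarrow> x \<le> y \<Longrightarrow> H2 x \<le> H2 y" "\<And>x. 0 < x \<Longrightarrow> 0 < H2 x"
begin

lemma powr_ln_affine_system_unique:
  assumes "0 < s" "0 < t" "H1 (t / s) = powr_ln_affine e A1 B1 s" "H2 (s / t) = powr_ln_affine e A2 B2 t"
    and "0 < s'" "0 < t'" "H1 (t' / s') = powr_ln_affine e A1 B1 s'" "H2 (s' / t') = powr_ln_affine e A2 B2 t'"
  shows "s = s' \<and> t = t'"
proof -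
  let ?g1 = "powr_ln_affine e A1 B1" and ?g2 = "powr_ln_affine e A2 B2"
  let ?I1 = "{exp (- B1 / A1)<..}" and ?I2 = "{exp (- B2 / A2)<..}"
  note mono1 = strict_mono_on_powr_ln_affine[OF A(1) e, of B1]
  note mono2 = strict_mono_on_powr_ln_affine[OF A(2) e, of B2]
  have reg1: "s \<in> ?I1" if "0 < s" "H1 (t / s) = ?g1 s" "0 < t" for s t
    using powr_ln_affine_pos_iff[OF A(1) \<open>0 < s\<close>] H1(2)[of "t / s"] that by simp
  have reg2: "t \<in> ?I2" if "0 < t" "H2 (s / t) = ?g2 t" "0 < s" for s t
    using powr_ln_affine_pos_iff[OF A(2) \<open>0 < t\<close>] H2(2)[of "s / t"] that by simp
  have one_sided: "s = s' \<and> t = t'"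
    if st: "0 < s" "0 < t" "H1 (t / s) = ?g1 s" "H2 (s / t) = ?g2 t"
      and st': "0 < s'" "0 < t'" "H1 (t' / s') = ?g1 s'" "H2 (s' / t') = ?g2 t'"
      and le: "t' / s' \<le> t / s" for s t s' t'
  proof -
    have I: "s \<in> ?I1" "s' \<in> ?I1" "t \<in> ?I2" "t' \<in> ?I2"
      using reg1[of s t] reg1[of s' t'] reg2[of t s] reg2[of t' s'] st st' by auto
    have "?g1 s' \<le> ?g1 s" using H1(1)[of "t' / s'" "t / s"] st st' le by simp
    then have "s' \<le> s" using strict_mono_on_less_eq[OF mono1 I(2,1)] by simp
    have "s / t \<le> s' / t'" using le st st' by (simp add: field_simps mult.commute)
    then have "?g2 t \<le> ?g2 t'" using H2(1)[of "s / t" "s' / t'"] st st' by simp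
    then have "t \<le> t'" using strict_mono_on_less_eq[OF mono2 I(3,4)] by simp
    have "t / s \<le> t' / s'" using \<open>s' \<le> s\<close> \<open>t \<le> t'\<close> st st' by (intro frac_le) auto
    with le have "?g1 s = ?g1 s'" using st(3) st'(3) by simp
    then have "s = s'" using strict_mono_on_eq[OF mono1 I(1,2)] by simp
    with \<open>t / s \<le> t' / s'\<close> le st show ?thesis by simp
  qed
  show ?thesis
  proof (cases "t' / s' \<le> t / s")
    case True
    then show ?thesis using one_sided[of s t s' t'] assms by blast
  next
    case False
    then show ?thesis using one_sided[of s' t' s t] assms by auto
  qed
qed

lemma powr_ln_affine_system_exists:
  assumes "\<And>x. 0 < x \<Longrightarrow> isCont H1 x" "\<And>x. 0 < x \<Longrightarrow> isCont H2 x"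
  shows "\<exists>s t. 0 < s \<and> 0 < t \<and> H1 (t / s) = powr_ln_affine e A1 B1 s
    \<and> H2 (s / t) = powr_ln_affine e A2 B2 t"
proof -
  define h1 where "h1 = the_inv_into {exp (- B1 / A1)<..} (powr_ln_affine e A1 B1)"
  define h2 where "h2 = the_inv_into {exp (- B2 / A2)<..} (powr_ln_affine e A2 B2)"
  note inv1 = powr_ln_affine_inverse[OF A(1) e, where B = B1, folded h1_def]
  note inv2 = powr_ln_affine_inverse[OF A(2) e, where B = B2, folded h2_def]
  \<comment> \<open>\<open>\<sigma> \<rho>\<close> and \<open>\<tau> \<rho>\<close> solve the first and the second equation for \<open>s\<close> and \<open>t\<close> if \<open>t / s = \<rho>\<close>\<close>
  define \<sigma> where "\<sigma> \<rho> = h1 (H1 \<rho>)" for \<rho>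
  define \<tau> where "\<tau> \<rho> = h2 (H2 (1 / \<rho>))" for \<rho>
  have "\<exists>\<rho>>0. \<tau> \<rho> = \<rho> * \<sigma> \<rho>"
  proof (rule ex_balanced_ratio)
    fix x y :: real assume "0 < x"
    show "isCont \<sigma> x" unfolding \<sigma>_def
      using \<open>0 < x\<close> by (intro isCont_o2[OF assms(1)] inv1(3) H1(2))
    have "isCont (\<lambda>\<rho>. 1 / \<rho>) x" using \<open>0 < x\<close> by (intro continuous_intros) auto
    then have "isCont (\<lambda>\<rho>. H2 (1 / \<rho>)) x"
      by (rule isCont_o2) (intro assms(2), simp add: \<open>0 < x\<close>)
    then show "isCont \<tau> x" unfolding \<tau>_def
      by (rule isCont_o2) (intro inv2(3) H2(2), simp add: \<open>0 < x\<close>)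
    show "0 < \<sigma> x" "0 < \<tau> x" unfolding \<sigma>_def \<tau>_def using \<open>0 < x\<close>
      by (simp_all add: inv1(1) inv2(1) H1(2) H2(2))
    assume "x \<le> y"
    then show "\<sigma> x \<le> \<sigma> y" unfolding \<sigma>_def using \<open>0 < x\<close> by (intro inv1(4) H1) auto
    show "\<tau> y \<le> \<tau> x" unfolding \<tau>_def using \<open>0 < x\<close> \<open>x \<le> y\<close>
      by (intro inv2(4) H2) (auto simp: divide_simps)
  qed
  then obtain \<rho> where \<rho>: "0 < \<rho>" "\<tau> \<rho> = \<rho> * \<sigma> \<rho>" by blast
  have s: "0 < \<sigma> \<rho>" "powr_ln_affine e A1 B1 (\<sigma> \<rho>) = H1 \<rho>"
    unfolding \<sigma>_def using \<rho>(1) by (simp_all add: inv1(1,2) H1(2))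
  have t: "0 < \<tau> \<rho>" "powr_ln_affine e A2 B2 (\<tau> \<rho>) = H2 (1 / \<rho>)"
    unfolding \<tau>_def using \<rho>(1) by (simp_all add: inv2(1,2) H2(2))
  show ?thesis
    by (rule exI[of _ "\<sigma> \<rho>"], rule exI[of _ "\<tau> \<rho>"]) (use s t \<rho> in simp)
qed

lemma powr_ln_affine_system_ex1:
  assumes "\<And>x. 0 < x \<Longrightarrow> isCont H1 x" "\<And>x. 0 < x \<Longrightarrow> isCont H2 x"
  shows "\<exists>!(s, t). 0 < s \<and> 0 < t \<and> H1 (t / s) = powr_ln_affine e A1 B1 s
    \<and> H2 (s / t) = powr_ln_affine e A2 B2 t"
proof -
  obtain s t where "0 < s \<and> 0 < t \<and> H1 (t / s) = powr_ln_affine e A1 B1 s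
      \<and> H2 (s / t) = powr_ln_affine e A2 B2 t"
    using powr_ln_affine_system_exists[OF assms] by blast
  then show ?thesis
    by (intro ex1I[of _ "(s, t)"]) (auto dest: powr_ln_affine_system_unique)
qed

end

section \<open>Rescaling the positive and negative parts of a sequence\<close>

definition rescale_parts :: "(int \<Rightarrow> real) \<Rightarrow> real \<Rightarrow> real \<Rightarrow> int \<Rightarrow> real" where
  "rescale_parts u s t = (\<lambda>n. s * pos_part u n + t * neg_part u n)"

lemma pos_part_rescale_parts:
  "0 \<le> s \<Longrightarrow> 0 \<le> t \<Longrightarrow> pos_part (rescale_parts u s t) = (\<lambda>n. s * pos_part u n)"
  unfolding rescale_parts_def pos_part_def neg_part_def
  by (rule ext) (auto simp: max_def min_def mult_le_0_iff zero_le_mult_iff)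

lemma neg_part_rescale_parts:
  "0 \<le> s \<Longrightarrow> 0 \<le> t \<Longrightarrow> neg_part (rescale_parts u s t) = (\<lambda>n. t * neg_part u n)"
  unfolding rescale_parts_def pos_part_def neg_part_def
  by (rule ext) (auto simp: max_def min_def mult_le_0_iff zero_le_mult_iff)

lemma rescale_parts_one: "rescale_parts u 1 1 = u"
  unfolding rescale_parts_def pos_part_def neg_part_def by (rule ext) (simp add: max_def min_def)

lemma pos_part_uminus: "pos_part (\<lambda>n. - u n) = (\<lambda>n. - neg_part u n)"
  unfolding pos_part_def neg_part_def by (rule ext) (simp add: max_def min_def)

lemma neg_part_uminus: "neg_part (\<lambda>n. - u n) = (\<lambda>n. - pos_part u n)"
  unfolding pos_part_def neg_part_def by (rule ext) (simp add: max_def min_def)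

lemma rescale_parts_uminus: "rescale_parts (\<lambda>n. - u n) t s = (\<lambda>n. - rescale_parts u s t n)"
  unfolding rescale_parts_def pos_part_uminus neg_part_uminus by (rule ext) simp

lemma fdiff_rescale_parts:
  "fdiff (rescale_parts u s t) n = s * fdiff (pos_part u) n + t * fdiff (neg_part u) n"
  unfolding fdiff_def rescale_parts_def by (simp add: algebra_simps)

lemma fdiff_pos_part_neg_part_same_sign: "0 \<le> fdiff (pos_part u) n * fdiff (neg_part u) n"
  unfolding fdiff_def pos_part_def neg_part_def
  by (cases "u n \<le> u (n + 1)") (auto simp: max_def min_def mult_nonneg_nonneg mult_nonpos_nonpos)

lemma abs_fdiff_rescale_parts:
  "0 \<le> s \<Longrightarrow> 0 \<le> t \<Longrightarrow>
    \<bar>fdiff (rescale_parts u s t) n\<bar> = s * \<bar>fdiff (pos_part u) n\<bar> + t * \<bar>fdiff (neg_part u) n\<bar>"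
  unfolding fdiff_rescale_parts by (rule abs_add_same_sign[OF fdiff_pos_part_neg_part_same_sign])

lemma dI_uminus: "dI a b c p q r (\<lambda>n. - w n) (\<lambda>n. - v n) = dI a b c p q r w v"
  unfolding dI_def fdiff_def by (simp add: algebra_simps abs_minus_commute)

lemma dI_neg_part:
  "dI a b c p q r w (neg_part w) = dI a b c p q r (\<lambda>n. - w n) (pos_part (\<lambda>n. - w n))"
  unfolding pos_part_uminus dI_uminus by simp

lemma abs_rescale_parts_le:
  "0 \<le> s \<Longrightarrow> 0 \<le> t \<Longrightarrow> \<bar>rescale_parts u s t n\<bar> \<le> max s t * \<bar>u n\<bar>"
  unfolding rescale_parts_def pos_part_def neg_part_def
  by (cases "0 \<le> u n") (auto simp: abs_mult intro: mult_right_mono)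

lemma abs_fdiff_rescale_parts_le:
  assumes "0 \<le> s" "0 \<le> t"
  shows "\<bar>fdiff (rescale_parts u s t) n\<bar> \<le> max s t * \<bar>fdiff u n\<bar>"
proof -
  have "s * \<bar>fdiff (pos_part u) n\<bar> + t * \<bar>fdiff (neg_part u) n\<bar>
      \<le> max s t * \<bar>fdiff (pos_part u) n\<bar> + max s t * \<bar>fdiff (neg_part u) n\<bar>"
    by (intro add_mono mult_right_mono) auto
  then show ?thesis
    using abs_fdiff_rescale_parts[of 1 1 u n] abs_fdiff_rescale_parts[OF assms, of u n]
    unfolding rescale_parts_one by (simp add: distrib_left)
qed

lemma pos_part_rescale_parts_powr_ln:
  assumes "0 < s" "0 \<le> t"
  shows "pos_part (rescale_parts u s t) n powr q * ln (pos_part (rescale_parts u s t) n powr r)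
    = s powr q * (r * ln s * pos_part u n powr q + pos_part u n powr q * ln (pos_part u n powr r))"
  unfolding pos_part_rescale_parts[OF less_imp_le[OF assms(1)] assms(2)]
  by (rule powr_ln_powr_mult[OF assms(1)]) (simp add: pos_part_def)

lemma spaceD_uminus: "u \<in> spaceD a b c p q r \<Longrightarrow> (\<lambda>n. - u n) \<in> spaceD a b c p q r"
  unfolding spaceD_def spaceE_def fdiff_def by (simp add: abs_minus_commute)

lemma pos_part_nonneg: "0 \<le> pos_part u n"
  unfolding pos_part_def by simp

lemma pos_part_le_abs: "pos_part u n \<le> \<bar>u n\<bar>"
  unfolding pos_part_def by simp

lemma infsum_pos_part_term_pos:
  fixes f :: "int \<Rightarrow> real \<Rightarrow> real"
  assumes "(\<lambda>n. f n (pos_part u n)) summable_on UNIV" "pos_part u \<noteq> (\<lambda>_. 0)"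
    and "\<And>n. 0 \<le> f n (pos_part u n)" "\<And>n x. 0 < x \<Longrightarrow> 0 < f n x"
  shows "0 < (\<Sum>\<^sub>\<infinity>n. f n (pos_part u n))"
proof -
  obtain n where "pos_part u n \<noteq> 0" using assms(2) by auto
  then have "0 < pos_part u n" using pos_part_nonneg[of u n] by simp
  then have "0 < f n (pos_part u n)" by (rule assms(4))
  also have "\<dots> \<le> (\<Sum>\<^sub>\<infinity>n. f n (pos_part u n))" using assms(1,3) by (rule term_le_infsum)
  finally show ?thesis .
qed

section \<open>The Nehari conditions along the rescalings\<close>

locale discrete_nehari =
  fixes a b c :: "int \<Rightarrow> real" and p q r :: real
  assumes p_gt_1: "1 < p" and p_less_q: "p < q"
    and a_pos: "\<And>n. 0 < a n" and b_pos: "\<And>n. 0 < b n" and c_pos: "\<And>n. 0 < c n"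
    and b_bounded_below: "\<exists>b0>0. \<forall>n. b0 \<le> b n"
    and c_summable: "c summable_on UNIV"
begin

definition grad_term :: "(int \<Rightarrow> real) \<Rightarrow> real \<Rightarrow> int \<Rightarrow> real" where
  "grad_term u \<rho> n = a n * \<bar>fdiff (pos_part u) n\<bar>
     * (\<bar>fdiff (pos_part u) n\<bar> + \<rho> * \<bar>fdiff (neg_part u) n\<bar>) powr (p - 1)"

definition grad_sum :: "(int \<Rightarrow> real) \<Rightarrow> real \<Rightarrow> real" where
  "grad_sum u \<rho> = (\<Sum>\<^sub>\<infinity>n. grad_term u \<rho> n)"

definition pot_sum :: "(int \<Rightarrow> real) \<Rightarrow> real" where
  "pot_sum u = (\<Sum>\<^sub>\<infinity>n. b n * pos_part u n powr p)"

definition pow_sum :: "(int \<Rightarrow> real) \<Rightarrow> real" where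
  "pow_sum u = (\<Sum>\<^sub>\<infinity>n. c n * pos_part u n powr q)"

definition log_sum :: "(int \<Rightarrow> real) \<Rightarrow> real" where
  "log_sum u = (\<Sum>\<^sub>\<infinity>n. c n * pos_part u n powr q * ln (pos_part u n powr r))"

lemma spaceE_summable:
  assumes "u \<in> spaceE a b p"
  shows "(\<lambda>n. a n * \<bar>fdiff u n\<bar> powr p) summable_on UNIV"
    and "(\<lambda>n. b n * \<bar>u n\<bar> powr p) summable_on UNIV"
  using assms unfolding spaceE_def
  by (auto elim!: summable_on_comparison_test simp: a_pos b_pos less_imp_le)

lemma spaceE_bounded:
  assumes "u \<in> spaceE a b p"
  obtains M where "\<And>n. \<bar>u n\<bar> \<le> M"
proof -
  obtain b0 where b0: "0 < b0" "\<And>n. b0 \<le> b n" using b_bounded_below by blast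
  define S where "S = (\<Sum>\<^sub>\<infinity>n. b n * \<bar>u n\<bar> powr p)"
  have "\<bar>u n\<bar> \<le> (S / b0) powr (1 / p)" for n
  proof -
    have "b0 * \<bar>u n\<bar> powr p \<le> b n * \<bar>u n\<bar> powr p" using b0 by (intro mult_right_mono) auto
    also have "\<dots> \<le> S" unfolding S_def
      by (rule term_le_infsum[OF spaceE_summable(2)[OF assms]]) (simp add: b_pos less_imp_le)
    finally have "\<bar>u n\<bar> powr p \<le> S / b0" using b0(1) by (simp add: field_simps)
    then have "(\<bar>u n\<bar> powr p) powr (1 / p) \<le> (S / b0) powr (1 / p)"
      using p_gt_1 by (intro powr_mono2) auto
    then show ?thesis using p_gt_1 by (simp add: powr_powr)
  qed
  then show ?thesis by (rule that)
qed

lemma summable_pot_term: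
  assumes "u \<in> spaceE a b p"
  shows "(\<lambda>n. b n * pos_part u n powr p) summable_on UNIV"
proof (rule summable_on_comparison_test[OF spaceE_summable(2)[OF assms]])
  fix n
  show "b n * pos_part u n powr p \<le> b n * \<bar>u n\<bar> powr p"
    using b_pos[of n] p_gt_1 pos_part_nonneg[of u n] pos_part_le_abs[of u n]
    by (intro mult_left_mono powr_mono2) auto
qed (simp add: b_pos less_imp_le)

lemma summable_pow_term:
  assumes "u \<in> spaceE a b p"
  shows "(\<lambda>n. c n * pos_part u n powr q) summable_on UNIV"
proof -
  obtain M where M: "\<And>n. \<bar>u n\<bar> \<le> M" using spaceE_bounded[OF assms] by blast
  show ?thesis
  proof (rule summable_on_comparison_test[OF summable_on_cmult_left[OF c_summable, of "M powr q"]])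
    fix n
    show "c n * pos_part u n powr q \<le> c n * M powr q"
      using c_pos[of n] p_gt_1 p_less_q pos_part_nonneg[of u n] pos_part_le_abs[of u n] M[of n]
      by (intro mult_left_mono powr_mono2) auto
  qed (simp add: c_pos less_imp_le)
qed

lemma summable_log_term:
  assumes "u \<in> spaceD a b c p q r"
  shows "(\<lambda>n. c n * pos_part u n powr q * ln (pos_part u n powr r)) summable_on UNIV"
proof -
  have "(\<lambda>n. c n * \<bar>u n\<bar> powr q * ln (\<bar>u n\<bar> powr r)) summable_on UNIV"
    using assms unfolding spaceD_def by simp
  then have "(\<lambda>n. norm (c n * \<bar>u n\<bar> powr q * ln (\<bar>u n\<bar> powr r))) summable_on UNIV"
    by (rule summable_on_iff_abs_summable_on_real[THEN iffD1])
  then have "(\<lambda>n. norm (c n * pos_part u n powr q * ln (pos_part u n powr r))) summable_on UNIV"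
    by (rule summable_on_comparison_test) (auto simp: pos_part_def max_def)
  then show ?thesis by (rule abs_summable_summable)
qed

lemma grad_term_nonneg: "0 \<le> \<rho> \<Longrightarrow> 0 \<le> grad_term u \<rho> n"
  unfolding grad_term_def using a_pos[of n] by simp

lemma grad_term_mono:
  assumes "0 \<le> x" "x \<le> y"
  shows "grad_term u x n \<le> grad_term u y n"
  unfolding grad_term_def using assms a_pos[of n] p_gt_1
  by (intro mult_left_mono powr_mono2 add_left_mono mult_right_mono) auto

lemma grad_term_le:
  assumes "0 \<le> \<rho>" "\<rho> \<le> R"
  shows "grad_term u \<rho> n \<le> max 1 R powr (p - 1) * (a n * \<bar>fdiff u n\<bar> powr p)"
proof -
  define X Y where "X = \<bar>fdiff (pos_part u) n\<bar>" and "Y = \<bar>fdiff (neg_part u) n\<bar>"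
  define K where "K = max 1 R"
  have XY: "\<bar>fdiff u n\<bar> = X + Y" "0 \<le> X" "0 \<le> Y"
    using abs_fdiff_rescale_parts[of 1 1 u n] unfolding rescale_parts_one X_def Y_def by simp_all
  have "X \<le> K * X" using XY(2) mult_right_mono[of 1 K X] unfolding K_def by simp
  moreover have "\<rho> * Y \<le> K * Y" using assms XY(3) mult_right_mono[of \<rho> K Y] unfolding K_def by simp
  ultimately have "X + \<rho> * Y \<le> K * (X + Y)" by (simp add: distrib_left)
  then have "(X + \<rho> * Y) powr (p - 1) \<le> K powr (p - 1) * (X + Y) powr (p - 1)"
    using XY assms p_gt_1 powr_mono2[of "p - 1" "X + \<rho> * Y" "K * (X + Y)"]
    by (simp add: powr_mult K_def)
  then have "a n * X * (X + \<rho> * Y) powr (p - 1) \<le> a n * (X + Y) * (K powr (p - 1) * (X + Y) powr (p - 1))"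
    using XY a_pos[of n] by (intro mult_mono mult_left_mono) auto
  also have "\<dots> = K powr (p - 1) * (a n * (\<bar>X + Y\<bar> powr (p - 1) * \<bar>X + Y\<bar>))"
    using XY by simp
  finally show ?thesis
    unfolding grad_term_def X_def[symmetric] Y_def[symmetric] abs_powr_minus_one_mult_abs XY(1)
    using XY(2,3) by (simp add: K_def)
qed

lemma summable_grad_term:
  assumes "u \<in> spaceE a b p" "0 \<le> \<rho>"
  shows "(\<lambda>n. grad_term u \<rho> n) summable_on UNIV"
  by (rule summable_on_comparison_test[OF summable_on_cmult_right[OF spaceE_summable(1)[OF assms(1)]]])
     (use grad_term_le grad_term_nonneg assms(2) in auto)

lemma grad_sum_nonneg: "0 \<le> \<rho> \<Longrightarrow> 0 \<le> grad_sum u \<rho>"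
  unfolding grad_sum_def by (intro infsum_nonneg grad_term_nonneg)

lemma grad_sum_mono: "u \<in> spaceE a b p \<Longrightarrow> 0 \<le> x \<Longrightarrow> x \<le> y \<Longrightarrow> grad_sum u x \<le> grad_sum u y"
  unfolding grad_sum_def by (intro infsum_mono summable_grad_term grad_term_mono) auto

lemma isCont_grad_sum:
  assumes "u \<in> spaceE a b p" "0 < x"
  shows "isCont (grad_sum u) x"
proof -
  have "continuous_on {0..x + 1} (grad_sum u)" unfolding grad_sum_def
  proof (rule continuous_on_infsum_dominated)
    show "continuous_on {0..x + 1} (\<lambda>\<rho>. grad_term u \<rho> n)" for n
      unfolding grad_term_def using p_gt_1
      by (intro continuous_on_mult_left continuous_on_powr' continuous_intros) auto
    show "\<bar>grad_term u \<rho> n\<bar> \<le> max 1 (x + 1) powr (p - 1) * (a n * \<bar>fdiff u n\<bar> powr p)"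
      if "\<rho> \<in> {0..x + 1}" for n \<rho>
      using that grad_term_le grad_term_nonneg by auto
    show "(\<lambda>n. max 1 (x + 1) powr (p - 1) * (a n * \<bar>fdiff u n\<bar> powr p)) summable_on UNIV"
      by (rule summable_on_cmult_right[OF spaceE_summable(1)[OF assms(1)]])
  qed
  then show ?thesis
    using assms(2) by (intro continuous_on_interior[of "{0..x + 1}"]) auto
qed

lemma pot_sum_pos: "u \<in> spaceE a b p \<Longrightarrow> pos_part u \<noteq> (\<lambda>_. 0) \<Longrightarrow> 0 < pot_sum u"
  unfolding pot_sum_def
  by (rule infsum_pos_part_term_pos[where f = "\<lambda>n x. b n * x powr p"])
     (auto intro: summable_pot_term simp: b_pos less_imp_le)

lemma pow_sum_pos: "u \<in> spaceE a b p \<Longrightarrow> pos_part u \<noteq> (\<lambda>_. 0) \<Longrightarrow> 0 < pow_sum u"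
  unfolding pow_sum_def
  by (rule infsum_pos_part_term_pos[where f = "\<lambda>n x. c n * x powr q"])
     (auto intro: summable_pow_term simp: c_pos less_imp_le)

lemma rescale_parts_spaceE:
  assumes "u \<in> spaceE a b p" "0 \<le> s" "0 \<le> t"
  shows "rescale_parts u s t \<in> spaceE a b p"
  unfolding spaceE_def mem_Collect_eq
proof (rule summable_on_comparison_test)
  define K where "K = max s t"
  show "(\<lambda>n. K powr p * (a n * \<bar>fdiff u n\<bar> powr p + b n * \<bar>u n\<bar> powr p)) summable_on UNIV"
    using assms(1) unfolding spaceE_def by (intro summable_on_cmult_right) simp
  fix n
  have "\<bar>fdiff (rescale_parts u s t) n\<bar> powr p \<le> K powr p * \<bar>fdiff u n\<bar> powr p"
    using abs_fdiff_rescale_parts_le[OF assms(2,3), of u n] assms(2,3) p_gt_1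
    by (subst powr_mult[symmetric]) (auto simp: K_def intro: powr_mono2)
  moreover have "\<bar>rescale_parts u s t n\<bar> powr p \<le> K powr p * \<bar>u n\<bar> powr p"
    using abs_rescale_parts_le[OF assms(2,3), of u n] assms(2,3) p_gt_1
    by (subst powr_mult[symmetric]) (auto simp: K_def intro: powr_mono2)
  ultimately show "a n * \<bar>fdiff (rescale_parts u s t) n\<bar> powr p + b n * \<bar>rescale_parts u s t n\<bar> powr p
      \<le> K powr p * (a n * \<bar>fdiff u n\<bar> powr p + b n * \<bar>u n\<bar> powr p)"
    using a_pos[of n] b_pos[of n]
    by (simp add: distrib_left mult.left_commute add_mono mult_left_mono)
qed (simp add: a_pos b_pos less_imp_le)

lemma has_sum_scaled_log_term:
  assumes "u \<in> spaceD a b c p q r"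
  shows "((\<lambda>n. c n * (s powr q * (r * ln s * pos_part u n powr q + pos_part u n powr q * ln (pos_part u n powr r))))
    has_sum s powr q * (r * ln s * pow_sum u + log_sum u)) UNIV"
proof -
  have uE: "u \<in> spaceE a b p" using assms unfolding spaceD_def by simp
  have "((\<lambda>n. r * ln s * (c n * pos_part u n powr q) + c n * pos_part u n powr q * ln (pos_part u n powr r))
      has_sum r * ln s * pow_sum u + log_sum u) UNIV"
    unfolding pow_sum_def log_sum_def
    by (intro has_sum_add has_sum_cmult_right has_sum_infsum summable_pow_term[OF uE]
        summable_log_term[OF assms])
  then have "((\<lambda>n. s powr q * (r * ln s * (c n * pos_part u n powr q) + c n * pos_part u n powr q * ln (pos_part u n powr r)))
      has_sum s powr q * (r * ln s * pow_sum u + log_sum u)) UNIV"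
    by (rule has_sum_cmult_right)
  then show ?thesis by (simp add: algebra_simps)
qed

lemma rescale_parts_spaceD:
  assumes uD: "u \<in> spaceD a b c p q r" and s: "0 < s" and t: "0 < t"
  shows "rescale_parts u s t \<in> spaceD a b c p q r"
proof -
  let ?w = "rescale_parts u s t" and ?v = "\<lambda>n. - u n"
  define L where "L v s n = c n * (s powr q * (r * ln s * pos_part v n powr q + pos_part v n powr q * ln (pos_part v n powr r)))"
    for v :: "int \<Rightarrow> real" and s n
  have "c n * \<bar>?w n\<bar> powr q * ln (\<bar>?w n\<bar> powr r) = L u s n + L ?v t n" for n
  proof -
    have "max (- ?w n) 0 = pos_part (rescale_parts ?v t s) n"
      unfolding rescale_parts_uminus by (simp add: pos_part_def)
    then show ?thesis
      using abs_powr_ln_split[of "?w n" q r] s t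
        pos_part_rescale_parts_powr_ln[of s t u n q r] pos_part_rescale_parts_powr_ln[of t s ?v n q r]
      unfolding L_def by (simp add: pos_part_def distrib_left mult.assoc)
  qed
  moreover have "(\<lambda>n. L u s n + L ?v t n) summable_on UNIV"
    unfolding L_def using has_sum_scaled_log_term[OF uD] has_sum_scaled_log_term[OF spaceD_uminus[OF uD]]
    by (intro summable_on_add) (auto intro: has_sum_imp_summable)
  moreover have "?w \<in> spaceE a b p" using uD s t unfolding spaceD_def by (intro rescale_parts_spaceE) auto
  ultimately show ?thesis unfolding spaceD_def by simp
qed

lemma grad_summand_rescale_parts:
  fixes u :: "int \<Rightarrow> real" and s t :: real
  assumes s: "0 < s" and t: "0 < t"
  defines "w \<equiv> rescale_parts u s t"
  shows "a n * \<bar>fdiff w n\<bar> powr (p - 2) * fdiff w n * fdiff (pos_part w) n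
    = s powr p * grad_term u (t / s) n"
proof -
  define X Y where "X = \<bar>fdiff (pos_part u) n\<bar>" and "Y = \<bar>fdiff (neg_part u) n\<bar>"
  have dpos: "fdiff (pos_part w) n = s * fdiff (pos_part u) n"
    unfolding w_def pos_part_rescale_parts[OF less_imp_le[OF s] less_imp_le[OF t]] fdiff_def
    by (simp add: algebra_simps)
  have "fdiff w n * fdiff (pos_part w) n
      = s * s * (fdiff (pos_part u) n)\<^sup>2 + s * t * (fdiff (pos_part u) n * fdiff (neg_part u) n)"
    unfolding dpos unfolding w_def fdiff_rescale_parts by (simp add: algebra_simps power2_eq_square)
  then have "0 \<le> fdiff w n * fdiff (pos_part w) n"
    using fdiff_pos_part_neg_part_same_sign[of u n] s t by simp
  then have "\<bar>fdiff w n\<bar> powr (p - 2) * fdiff w n * fdiff (pos_part w) n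
      = \<bar>fdiff w n\<bar> powr (p - 1) * \<bar>fdiff (pos_part w) n\<bar>"
    by (rule abs_powr_minus_two_mult_same_sign)
  also have "\<dots> = (s * (X + t / s * Y)) powr (p - 1) * (s * X)"
  proof -
    have "s * X + t * Y = s * (X + t / s * Y)" using s by (simp add: field_simps)
    then show ?thesis
      unfolding w_def abs_fdiff_rescale_parts[OF less_imp_le[OF s] less_imp_le[OF t]]
        dpos[unfolded w_def] X_def[symmetric] Y_def[symmetric]
      using s by (simp add: abs_mult X_def)
  qed
  also have "\<dots> = (s powr (p - 1) * s) * ((X + t / s * Y) powr (p - 1) * X)"
    using s t by (simp add: powr_mult X_def Y_def)
  also have "s powr (p - 1) * s = s powr p"
    using abs_powr_minus_one_mult_abs[of s p] s by simp
  finally show ?thesis unfolding grad_term_def X_def[symmetric] Y_def[symmetric]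
    by (simp add: mult_ac)
qed

lemma pot_summand_rescale_parts:
  fixes u :: "int \<Rightarrow> real" and s t :: real
  assumes s: "0 < s" and t: "0 < t"
  defines "w \<equiv> rescale_parts u s t"
  shows "b n * \<bar>w n\<bar> powr (p - 2) * w n * pos_part w n = s powr p * (b n * pos_part u n powr p)"
proof -
  have "\<bar>w n\<bar> powr (p - 2) * w n * pos_part w n = pos_part w n powr p"
    unfolding pos_part_def by (rule abs_powr_minus_two_mult_max)
  also have "\<dots> = s powr p * pos_part u n powr p"
    unfolding w_def pos_part_rescale_parts[OF less_imp_le[OF s] less_imp_le[OF t]]
    using s pos_part_nonneg[of u n] by (simp add: powr_mult)
  finally show ?thesis by (simp add: mult_ac)
qed

lemma log_summand_rescale_parts:
  fixes u :: "int \<Rightarrow> real" and s t :: real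
  assumes s: "0 < s" and t: "0 < t"
  defines "w \<equiv> rescale_parts u s t"
  shows "c n * \<bar>w n\<bar> powr (q - 2) * w n * pos_part w n * ln (\<bar>w n\<bar> powr r)
    = c n * (s powr q * (r * ln s * pos_part u n powr q + pos_part u n powr q * ln (pos_part u n powr r)))"
proof -
  have "\<bar>w n\<bar> powr (q - 2) * w n * pos_part w n * ln (\<bar>w n\<bar> powr r)
      = pos_part w n powr q * ln (pos_part w n powr r)"
    unfolding pos_part_def abs_powr_minus_two_mult_max max_powr_ln_abs ..
  then show ?thesis
    unfolding w_def pos_part_rescale_parts_powr_ln[OF s less_imp_le[OF t]] by (simp add: mult.assoc)
qed

lemma dI_rescale_parts_pos_part:
  fixes u :: "int \<Rightarrow> real" and s t :: real
  assumes uD: "u \<in> spaceD a b c p q r" and s: "0 < s" and t: "0 < t"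
  defines "w \<equiv> rescale_parts u s t"
  shows "dI a b c p q r w (pos_part w)
    = s powr p * (grad_sum u (t / s) + pot_sum u - powr_ln_affine (q - p) (r * pow_sum u) (log_sum u) s)"
proof -
  have uE: "u \<in> spaceE a b p" using uD unfolding spaceD_def by simp
  have first: "((\<lambda>n. s powr p * grad_term u (t / s) n + s powr p * (b n * pos_part u n powr p))
      has_sum s powr p * grad_sum u (t / s) + s powr p * pot_sum u) UNIV"
    unfolding grad_sum_def pot_sum_def using s t
    by (intro has_sum_add has_sum_cmult_right has_sum_infsum summable_grad_term[OF uE]
        summable_pot_term[OF uE]) simp
  have "dI a b c p q r w (pos_part w)
      = (s powr p * grad_sum u (t / s) + s powr p * pot_sum u) - s powr q * (r * ln s * pow_sum u + log_sum u)"
    unfolding dI_def w_def grad_summand_rescale_parts[OF s t] pot_summand_rescale_parts[OF s t]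
      log_summand_rescale_parts[OF s t] infsumI[OF has_sum_scaled_log_term[OF uD]] infsumI[OF first]
    ..
  also have "s powr q = s powr p * s powr (q - p)"
    by (simp add: powr_add[symmetric])
  finally show ?thesis unfolding powr_ln_affine_def by (simp add: algebra_simps)
qed

lemma rescale_parts_in_nehariM_iff:
  assumes uD: "u \<in> spaceD a b c p q r" and u: "pos_part u \<noteq> (\<lambda>_. 0)" "neg_part u \<noteq> (\<lambda>_. 0)"
    and s: "0 < s" and t: "0 < t"
  defines "v \<equiv> \<lambda>n. - u n"
  shows "rescale_parts u s t \<in> nehariM a b c p q r \<longleftrightarrow>
    grad_sum u (t / s) + pot_sum u = powr_ln_affine (q - p) (r * pow_sum u) (log_sum u) s \<and>
    grad_sum v (s / t) + pot_sum v = powr_ln_affine (q - p) (r * pow_sum v) (log_sum v) t"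
proof -
  let ?w = "rescale_parts u s t"
  have "pos_part ?w \<noteq> (\<lambda>_. 0)"
    using u(1) s t unfolding pos_part_rescale_parts[OF less_imp_le[OF s] less_imp_le[OF t]]
    by (auto simp: fun_eq_iff)
  moreover have "neg_part ?w \<noteq> (\<lambda>_. 0)"
    using u(2) s t unfolding neg_part_rescale_parts[OF less_imp_le[OF s] less_imp_le[OF t]]
    by (auto simp: fun_eq_iff)
  moreover have "dI a b c p q r ?w (neg_part ?w) = dI a b c p q r (rescale_parts v t s) (pos_part (rescale_parts v t s))"
    unfolding dI_neg_part v_def rescale_parts_uminus ..
  ultimately show ?thesis
    using rescale_parts_spaceD[OF uD s t] s t dI_rescale_parts_pos_part[OF uD s t]
      dI_rescale_parts_pos_part[OF spaceD_uminus[OF uD, folded v_def] t s]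
    unfolding nehariM_def by simp
qed

end

theorem lemma2p7:
  fixes a b c :: "int \<Rightarrow> real" and p q r :: real and u :: "int \<Rightarrow> real"
  assumes hp: "1 < p" and hpq: "p < q" and hp2: "\<exists>k::nat. k > 0 \<and> p / 2 = real k"
    and hr: "r \<ge> 1"
    and ha: "\<And>n. a n > 0" and hb: "\<And>n. b n > 0" and hc: "\<And>n. c n > 0"
    and C1: "\<exists>b0>0. \<forall>n. b n \<ge> b0"
    and C1': "filterlim b at_top at_top" and C1'': "filterlim b at_top at_bot"
    and C2: "\<exists>c0>0. \<forall>n. c n \<le> c0"
    and C2': "c summable_on UNIV"
    and hu: "u \<in> spaceD a b c p q r"
    and hup: "pos_part u \<noteq> (\<lambda>_. 0)" and hun: "neg_part u \<noteq> (\<lambda>_. 0)"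
  shows "\<exists>!(s0, t0). s0 > 0 \<and> t0 > 0 \<and>
           (\<lambda>n. s0 * pos_part u n + t0 * neg_part u n) \<in> nehariM a b c p q r"
proof -
  interpret discrete_nehari a b c p q r
    using hp hpq ha hb hc C1 C2' by unfold_locales auto
  define v where "v = (\<lambda>n. - u n)"
  have vD: "v \<in> spaceD a b c p q r" unfolding v_def by (rule spaceD_uminus[OF hu])
  have uE: "u \<in> spaceE a b p" and vE: "v \<in> spaceE a b p" using hu vD unfolding spaceD_def by auto
  have hvp: "pos_part v \<noteq> (\<lambda>_. 0)" using hun unfolding v_def pos_part_uminus by (auto simp: fun_eq_iff)
  have ex1: "\<exists>!(s, t). 0 < s \<and> 0 < t
      \<and> grad_sum u (t / s) + pot_sum u = powr_ln_affine (q - p) (r * pow_sum u) (log_sum u) s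
      \<and> grad_sum v (s / t) + pot_sum v = powr_ln_affine (q - p) (r * pow_sum v) (log_sum v) t"
    using hpq hr pow_sum_pos[OF uE hup] pow_sum_pos[OF vE hvp]
      grad_sum_nonneg pot_sum_pos[OF uE hup] pot_sum_pos[OF vE hvp]
    by (intro powr_ln_affine_system_ex1 add_mono grad_sum_mono uE vE isCont_add isCont_grad_sum
        continuous_const add_nonneg_pos) auto
  have nehari_iff: "(0 < s \<and> 0 < t \<and> rescale_parts u s t \<in> nehariM a b c p q r) \<longleftrightarrow> (0 < s \<and> 0 < t
      \<and> grad_sum u (t / s) + pot_sum u = powr_ln_affine (q - p) (r * pow_sum u) (log_sum u) s
      \<and> grad_sum v (s / t) + pot_sum v = powr_ln_affine (q - p) (r * pow_sum v) (log_sum v) t)" for s t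
    using rescale_parts_in_nehariM_iff[OF hu hup hun, folded v_def] by blast
  show ?thesis unfolding rescale_parts_def[symmetric] nehari_iff by (rule ex1)
qed

end
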